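(* Let $t\geq 2$, let $q$ be a prime power and $d\in F_q$. Suppose there is a $2t\times 2t$ matrix $E=(E_1,E_2)$ over $F_q$, with $E_1,E_2$ of size $2t\times t$, such that (1) $E_1$, $E_2$, $E_1+E_2$, $E_1-E_2$ all belong to $M^{(t)}_{2t\times t}(F_q)$, and (2) the $2t\times 2t$ matrices $E$, $(E_1,E_1+dE_2)$, $(E_2,E_1+dE_2)$, $(E_1+E_2,E_1+dE_2)$, $(E_1-E_2,E_1+dE_2)$ are all nonsingular. Then there exists a $q^t$-CMS$(q^t,t)$.
   Context: $M^{(t)}_{k\times s}(F_q)$ denotes the set of $k\times s$ matrices over the finite field $F_q$ in which any $t$ rows are linearly independent. An MS$(n,t)$ is an $n\times n$ matrix with entries $0,\dots,n^2-1$ such that for each $e=1,\dots,t$ the entrywise $e$-th power has all row sums, column sums, main-diagonal sum and back-diagonal sum (entries $(i,n-1-i)$) equal. With $S_e(n)=\frac1n\sum_{k=0}^{n^2-1}k^e$, a family $\{B_0,\dots,B_{m-1}\}$ of MS$(n,t)$s, $B_s=(b^{(s)}_{i,j})$, $i,j\in\{0,\dots,n-1\}$, is an $m$-CMS$(n,t)$ if $\sum_{s}\sum_{j}(b^{(s)}_{i,j})^{t+1}=mS_{t+1}(n)$ for every $i$, $\sum_{s}\sum_{i}(b^{(s)}_{i,j})^{t+1}=mS_{t+1}(n)$ for every $j$, and $\sum_s\sum_i(b^{(s)}_{i,i})^{t+1}=\sum_s\sum_i(b^{(s)}_{i,n-1-i})^{t+1}=mS_{t+1}(n)$. *)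

theory Defs
  imports "Jordan_Normal_Form.Determinant" "HOL.Real"
begin

definition hcat :: "'a mat \<Rightarrow> 'a mat \<Rightarrow> 'a mat" where
  "hcat A B = mat (dim_row A) (dim_col A + dim_col B)
     (\<lambda>(i,j). if j < dim_col A then A $$ (i,j) else B $$ (i, j - dim_col A))"

definition M_t :: "nat \<Rightarrow> nat \<Rightarrow> nat \<Rightarrow> ('a::field) mat set" where
  "M_t t k s = {A. A \<in> carrier_mat k s \<and>
     (\<forall>I. I \<subseteq> {0..<k} \<and> card I = t \<longrightarrow>
        (\<forall>c :: nat \<Rightarrow> 'a. (\<forall>j<s. (\<Sum>i\<in>I. c i * A $$ (i,j)) = 0) \<longrightarrow> (\<forall>i\<in>I. c i = 0)))}"

definition S :: "nat \<Rightarrow> nat \<Rightarrow> real" where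
  "S e n = (\<Sum>k<n^2. real k ^ e) / real n"

definition MS :: "nat \<Rightarrow> nat \<Rightarrow> (nat \<Rightarrow> nat \<Rightarrow> nat) \<Rightarrow> bool" where
  "MS n t B \<longleftrightarrow>
     bij_betw (\<lambda>(i,j). B i j) ({0..<n} \<times> {0..<n}) {0..<n^2} \<and>
     (\<forall>e\<in>{1..t}. \<exists>c::nat.
        (\<forall>i<n. (\<Sum>j<n. B i j ^ e) = c) \<and>
        (\<forall>j<n. (\<Sum>i<n. B i j ^ e) = c) \<and>
        (\<Sum>i<n. B i i ^ e) = c \<and>
        (\<Sum>i<n. B i (n - 1 - i) ^ e) = c)"

definition CMS :: "nat \<Rightarrow> nat \<Rightarrow> nat \<Rightarrow> (nat \<Rightarrow> nat \<Rightarrow> nat \<Rightarrow> nat) \<Rightarrow> bool" where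
  "CMS m n t B \<longleftrightarrow>
     (\<forall>s<m. MS n t (B s)) \<and>
     (\<forall>i<n. (\<Sum>s<m. \<Sum>j<n. real (B s i j) ^ (t+1)) = real m * S (t+1) n) \<and>
     (\<forall>j<n. (\<Sum>s<m. \<Sum>i<n. real (B s i j) ^ (t+1)) = real m * S (t+1) n) \<and>
     (\<Sum>s<m. \<Sum>i<n. real (B s i i) ^ (t+1)) = real m * S (t+1) n \<and>
     (\<Sum>s<m. \<Sum>i<n. real (B s i (n - 1 - i)) ^ (t+1)) = real m * S (t+1) n"

end

theory Submission
  imports Defs "HOL-Library.FuncSet"
begin

text \<open>
  Label the cells by vectors of \<open>F\<^sub>q\<^sup>2\<^sup>t\<close>, read as base-\<open>q\<close> numbers
  \<open>V w = \<Sum>\<^sub>i q\<^sup>i \<delta>(w\<^sub>i)\<close>, and put \<open>B\<^sub>s(i,j) = V(E\<^sub>1 g\<^sub>i + E\<^sub>2 g\<^sub>j + F g\<^sub>s)\<close> with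
  \<open>F = E\<^sub>1 + d E\<^sub>2\<close>, where \<open>g\<close> enumerates \<open>F\<^sub>q\<^sup>t\<close> so that \<open>g\<^sub>n\<^sub>-\<^sub>1\<^sub>-\<^sub>i = c - g\<^sub>i\<close>.
  Each row, column and diagonal of a square is the image of \<open>y \<mapsto> A y + b\<close> on \<open>F\<^sub>q\<^sup>t\<close> with
  \<open>A\<close> one of \<open>E\<^sub>1, E\<^sub>2, E\<^sub>1 + E\<^sub>2, E\<^sub>1 - E\<^sub>2\<close>. For \<open>e \<le> t\<close> the power \<open>V\<^sup>e\<close> expands into
  monomials in at most \<open>e\<close> coordinates, and any \<open>t\<close> coordinates of \<open>A y + b\<close> run
  uniformly through \<open>F\<^sub>q\<^sup>t\<close> because any \<open>t\<close> rows of \<open>A\<close> are independent; so all these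
  power sums agree. Every plane of the cube used by the CMS conditions, and every square
  itself, is the image of a nonsingular affine map on \<open>F\<^sub>q\<^sup>2\<^sup>t\<close>, hence runs exactly once
  through \<open>0, \<dots>, n\<^sup>2 - 1\<close>.
\<close>

lemma card_carrier_vec: "card (carrier_vec n :: 'a::finite vec set) = card (UNIV :: 'a set) ^ n"
proof -
  have "bij_betw (\<lambda>v. restrict (($) v) {0..<n}) (carrier_vec n) ({0..<n} \<rightarrow>\<^sub>E (UNIV :: 'a set))"
    by (rule bij_betw_byWitness[where f' = "vec n"]) (auto simp: PiE_def extensional_def fun_eq_iff)
  then show ?thesis
    by (simp add: bij_betw_same_card card_PiE)
qed

lemma finite_carrier_vec: "finite (carrier_vec n :: 'a::finite vec set)"
proof (rule card_ge_0_finite)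
  show "card (carrier_vec n :: 'a vec set) > 0"
    by (simp add: card_carrier_vec finite_UNIV_card_ge_0)
qed

lemma symmetric_enumeration_insert_pair:
  fixes m :: nat
  assumes g: "bij_betw g {0..<m} Y" and g_sym: "\<forall>k<m. g (m - 1 - k) = \<sigma> (g k)"
    and x: "x \<notin> Y" "\<sigma> x \<notin> Y" "\<sigma> x \<noteq> x" "\<sigma> (\<sigma> x) = x"
  shows "\<exists>h. bij_betw h {0..<m + 2} (insert x (insert (\<sigma> x) Y)) \<and> (\<forall>k<m + 2. h (m + 1 - k) = \<sigma> (h k))"
proof -
  define h where "h k = (if k = 0 then x else if k = m + 1 then \<sigma> x else g (k - 1))" for k
  have "{0..<m + 2} = insert 0 (insert (m + 1) (Suc ` {0..<m}))"
    by (auto simp: image_iff)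
  moreover have "h ` Suc ` {0..<m} = g ` {0..<m}"
    unfolding image_image by (rule image_cong) (auto simp: h_def)
  moreover have "g ` {0..<m} = Y"
    using g by (simp add: bij_betw_def)
  ultimately have "h ` {0..<m + 2} = insert (h 0) (insert (h (m + 1)) Y)"
    by (simp only: image_insert)
  also have "\<dots> = insert x (insert (\<sigma> x) Y)"
    by (simp add: h_def)
  finally have "h ` {0..<m + 2} = insert x (insert (\<sigma> x) Y)" .
  moreover have "card (insert x (insert (\<sigma> x) Y)) = m + 2"
    using g x bij_betw_finite[OF g] by (simp add: bij_betw_same_card[OF g, symmetric])
  ultimately have "bij_betw h {0..<m + 2} (insert x (insert (\<sigma> x) Y))"
    by (simp add: bij_betw_def eq_card_imp_inj_on)
  moreover have "h (m + 1 - k) = \<sigma> (h k)" if "k < m + 2" for k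
    using that g_sym[rule_format, of "k - 1"] x(4) by (auto simp: h_def)
  ultimately show ?thesis
    by blast
qed

lemma involution_symmetric_enumeration:
  assumes "finite X" "\<forall>x\<in>X. \<sigma> x \<in> X \<and> \<sigma> (\<sigma> x) = x" "card {x\<in>X. \<sigma> x = x} \<le> 1"
  shows "\<exists>g. bij_betw g {0..<card X} X \<and> (\<forall>k<card X. g (card X - 1 - k) = \<sigma> (g k))"
  using assms
proof (induction "card X" arbitrary: X rule: less_induct)
  case less
  show ?case
  proof (cases "\<exists>x\<in>X. \<sigma> x \<noteq> x")
    case True
    then obtain x where x: "x \<in> X" "\<sigma> x \<noteq> x" by blast
    define Y where "Y = X - {x, \<sigma> x}"
    have \<sigma>x: "\<sigma> x \<in> X" "\<sigma> (\<sigma> x) = x"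
      using less.prems x by auto
    have Y: "finite Y" "x \<notin> Y" "\<sigma> x \<notin> Y"
      using less.prems(1) by (auto simp: Y_def)
    have X: "X = insert x (insert (\<sigma> x) Y)"
      using x \<sigma>x by (auto simp: Y_def)
    then have card_X: "card X = card Y + 2"
      using Y x(2) by simp
    have "\<sigma> y \<in> Y \<and> \<sigma> (\<sigma> y) = y" if "y \<in> Y" for y
    proof -
      have "y \<noteq> x" "y \<noteq> \<sigma> x" and \<sigma>y: "\<sigma> y \<in> X" "\<sigma> (\<sigma> y) = y"
        using that less.prems(2) unfolding Y_def by auto
      then have "\<sigma> y \<noteq> x" "\<sigma> y \<noteq> \<sigma> x"
        using \<sigma>x(2) by metis+
      then show ?thesis
        using \<sigma>y unfolding Y_def by auto
    qed
    moreover have "card {y\<in>Y. \<sigma> y = y} \<le> card {y\<in>X. \<sigma> y = y}"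
      using less.prems(1) by (intro card_mono) (auto simp: Y_def)
    then have "card {y\<in>Y. \<sigma> y = y} \<le> 1"
      using less.prems(3) by linarith
    ultimately have "\<exists>g. bij_betw g {0..<card Y} Y \<and> (\<forall>k<card Y. g (card Y - 1 - k) = \<sigma> (g k))"
      using card_X Y(1) by (intro less.hyps) auto
    then obtain g where "bij_betw g {0..<card Y} Y" "\<forall>k<card Y. g (card Y - 1 - k) = \<sigma> (g k)"
      by blast
    from symmetric_enumeration_insert_pair[OF this Y(2,3) x(2) \<sigma>x(2)]
    show ?thesis
      unfolding card_X by (subst X) simp
  next
    case False
    then have "{x\<in>X. \<sigma> x = x} = X"
      by auto
    then have "card X \<le> 1"
      using less.prems(3) by simp
    then consider "X = {}" | z where "X = {z}"
      using less.prems(1) by (cases "card X") (auto simp: card_1_singleton_iff)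
    then show ?thesis
    proof cases
      case 1
      then show ?thesis by (simp add: bij_betw_def)
    next
      case (2 z)
      then show ?thesis
        using less.prems(2) by (intro exI[where x = "\<lambda>_. z"]) (auto simp: bij_betw_def)
    qed
  qed
qed

lemma M_t_carrier: "A \<in> M_t t k s \<Longrightarrow> A \<in> carrier_mat k s"
  by (simp add: M_t_def)

lemma M_t_row_combinations_surj:
  fixes A :: "'a::{finite,field} mat"
  assumes A: "A \<in> M_t t k t" and J: "J \<subseteq> {0..<k}" "card J = t"
  shows "(\<lambda>c. restrict (\<lambda>j. \<Sum>i\<in>J. c i * A $$ (i,j)) {0..<t}) ` (J \<rightarrow>\<^sub>E UNIV) = {0..<t} \<rightarrow>\<^sub>E UNIV"
    (is "?L ` _ = _")
proof (rule card_subset_eq)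
  have indep: "\<forall>i\<in>J. c i = 0" if "\<forall>j<t. (\<Sum>i\<in>J. c i * A $$ (i,j)) = 0" for c
    using A J that unfolding M_t_def by blast
  have "inj_on ?L (J \<rightarrow>\<^sub>E UNIV)"
  proof (rule inj_onI)
    fix c c' assume c: "c \<in> J \<rightarrow>\<^sub>E UNIV" "c' \<in> J \<rightarrow>\<^sub>E UNIV" and eq: "?L c = ?L c'"
    have "(\<Sum>i\<in>J. (c i - c' i) * A $$ (i,j)) = 0" if "j < t" for j
      using fun_cong[OF eq, of j] that by (simp add: left_diff_distrib sum_subtractf)
    then show "c = c'"
      using indep[of "\<lambda>i. c i - c' i"] by (intro PiE_ext[OF c]) auto
  qed
  moreover have "finite J"
    using J finite_subset by blast
  ultimately show "card (?L ` (J \<rightarrow>\<^sub>E UNIV)) = card ({0..<t} \<rightarrow>\<^sub>E (UNIV :: 'a set))"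
    using J by (simp add: card_image card_PiE)
qed (auto intro: image_subsetI simp: finite_PiE)

lemma M_t_restricted_kernel:
  fixes A :: "'a::{finite,field} mat"
  assumes A: "A \<in> M_t t k t" and J: "J \<subseteq> {0..<k}" "card J = t"
    and u: "u \<in> carrier_vec t" and Au: "\<forall>i\<in>J. (A *\<^sub>v u) $ i = 0" and j0: "j0 < t"
  shows "u $ j0 = 0"
proof -
  have Ac: "A \<in> carrier_mat k t"
    using A by (rule M_t_carrier)
  have "restrict (\<lambda>j. if j = j0 then 1 else 0) {0..<t} \<in> {0..<t} \<rightarrow>\<^sub>E (UNIV :: 'a set)"
    by simp
  \<comment> \<open>the rows of \<open>A\<close> indexed by \<open>J\<close> span the dual space, in particular the \<open>j0\<close>-th coordinate\<close>
  then obtain c where c: "restrict (\<lambda>j. if j = j0 then 1 else 0) {0..<t} =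
      restrict (\<lambda>j. \<Sum>i\<in>J. c i * A $$ (i,j)) {0..<t}"
    unfolding M_t_row_combinations_surj[OF A J, symmetric] by blast
  have c_j: "(\<Sum>i\<in>J. c i * A $$ (i,j)) = (if j = j0 then 1 else 0)" if "j < t" for j
    using fun_cong[OF c, of j] that by simp
  have "u $ j0 = (\<Sum>j<t. if j = j0 then u $ j else 0)"
    using j0 by simp
  also have "\<dots> = (\<Sum>j<t. (\<Sum>i\<in>J. c i * A $$ (i,j)) * u $ j)"
    using c_j by (intro sum.cong) auto
  also have "\<dots> = (\<Sum>i\<in>J. c i * (\<Sum>j<t. A $$ (i,j) * u $ j))"
    by (simp add: sum_distrib_left sum_distrib_right mult.assoc sum.swap[of _ "{..<t}"])
  also have "\<dots> = (\<Sum>i\<in>J. c i * (A *\<^sub>v u) $ i)"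
    using J u Ac by (intro sum.cong refl) (auto simp: scalar_prod_def lessThan_atLeast0)
  also have "\<dots> = 0"
    using Au by simp
  finally show ?thesis .
qed

lemma M_t_restrict_affine_bij:
  fixes A :: "'a::{finite,field} mat"
  assumes A: "A \<in> M_t t k t" and b: "b \<in> carrier_vec k" and J: "J \<subseteq> {0..<k}" "card J = t"
  shows "bij_betw (\<lambda>y. restrict (\<lambda>i. (A *\<^sub>v y + b) $ i) J) (carrier_vec t) (J \<rightarrow>\<^sub>E UNIV)"
    (is "bij_betw ?R _ _")
proof -
  have Ac: "A \<in> carrier_mat k t"
    using A by (rule M_t_carrier)
  have "inj_on ?R (carrier_vec t)"
  proof (rule inj_onI)
    fix y y' assume y: "y \<in> carrier_vec t" "y' \<in> carrier_vec t" and eq: "?R y = ?R y'"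
    have "(A *\<^sub>v (y - y')) $ i = 0" if "i \<in> J" for i
      using fun_cong[OF eq, of i] that J y Ac b by (auto simp: mult_minus_distrib_mat_vec)
    then have "(y - y') $ j = 0" if "j < t" for j
      using y that by (intro M_t_restricted_kernel[OF A J]) auto
    then show "y = y'"
      using y by (intro eq_vecI) auto
  qed
  moreover have "finite J"
    using J finite_subset by blast
  moreover have "?R ` carrier_vec t = J \<rightarrow>\<^sub>E UNIV"
  proof (rule card_subset_eq)
    show "card (?R ` carrier_vec t) = card (J \<rightarrow>\<^sub>E (UNIV :: 'a set))"
      using J \<open>finite J\<close> card_image[OF calculation(1)] by (simp add: card_PiE card_carrier_vec)
    show "?R ` carrier_vec t \<subseteq> J \<rightarrow>\<^sub>E UNIV"
      by (intro image_subsetI) simp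
    show "finite (J \<rightarrow>\<^sub>E (UNIV :: 'a set))"
      using \<open>finite J\<close> by (simp add: finite_PiE)
  qed
  ultimately show ?thesis
    by (simp add: bij_betw_def)
qed

definition depends_only_on :: "nat set \<Rightarrow> ('a vec \<Rightarrow> 'b) \<Rightarrow> bool" where
  "depends_only_on J h \<longleftrightarrow> (\<forall>w w'. (\<forall>i\<in>J. w $ i = w' $ i) \<longrightarrow> h w = h w')"

lemma sum_M_t_affine_depends_only_on:
  fixes A :: "'a::{finite,field} mat" and h :: "'a vec \<Rightarrow> 'b::comm_monoid_add"
  assumes A: "A \<in> M_t t k t" and b: "b \<in> carrier_vec k" and J: "J \<subseteq> {0..<k}" "card J = t"
    and h: "depends_only_on J h"
  shows "(\<Sum>y\<in>carrier_vec t. h (A *\<^sub>v y + b)) = (\<Sum>z\<in>J \<rightarrow>\<^sub>E UNIV. h (vec k (\<lambda>i. if i \<in> J then z i else 0)))"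
proof -
  have "h (A *\<^sub>v y + b) = h (vec k (\<lambda>i. if i \<in> J then restrict (\<lambda>i. (A *\<^sub>v y + b) $ i) J i else 0))" for y
    using h J(1) unfolding depends_only_on_def by (intro h[unfolded depends_only_on_def, rule_format]) auto
  then show ?thesis
    using sum.reindex_bij_betw[OF M_t_restrict_affine_bij[OF A b J]] by simp
qed

lemma sum_M_t_affine_invariant:
  fixes A A' :: "'a::{finite,field} mat" and h :: "'a vec \<Rightarrow> 'b::comm_monoid_add"
  assumes A: "A \<in> M_t t k t" "A' \<in> M_t t k t" and b: "b \<in> carrier_vec k" "b' \<in> carrier_vec k"
    and K: "K \<subseteq> {0..<k}" "card K \<le> t" "t \<le> k" and h: "depends_only_on K h"
  shows "(\<Sum>y\<in>carrier_vec t. h (A *\<^sub>v y + b)) = (\<Sum>y\<in>carrier_vec t. h (A' *\<^sub>v y + b'))"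
proof -
  have "finite K"
    using K(1) finite_subset by blast
  then have "t - card K \<le> card ({0..<k} - K)"
    using K by (simp add: card_Diff_subset)
  then obtain T where T: "T \<subseteq> {0..<k} - K" "card T = t - card K"
    by (meson obtain_subset_with_card_n)
  moreover have "finite T" "K \<inter> T = {}"
    using T(1) finite_subset by auto
  ultimately have J: "K \<union> T \<subseteq> {0..<k}" "card (K \<union> T) = t"
    using K \<open>finite K\<close> by (auto simp: card_Un_disjoint)
  have hJ: "depends_only_on (K \<union> T) h"
    using h unfolding depends_only_on_def by blast
  show ?thesis
    unfolding sum_M_t_affine_depends_only_on[OF A(1) b(1) J hJ] sum_M_t_affine_depends_only_on[OF A(2) b(2) J hJ]
    ..
qed

definition digit_value :: "('a \<Rightarrow> nat) \<Rightarrow> nat \<Rightarrow> nat \<Rightarrow> 'a vec \<Rightarrow> nat" where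
  "digit_value \<delta> q N w = (\<Sum>i<N. q ^ i * \<delta> (w $ i))"

lemma digit_value_power:
  "digit_value \<delta> q N w ^ e = (\<Sum>p\<in>{0..<e} \<rightarrow>\<^sub>E {..<N}. \<Prod>l\<in>{0..<e}. q ^ p l * \<delta> (w $ p l))"
  unfolding digit_value_def by (subst prod_sum_PiE[symmetric]) auto

lemma sum_M_t_affine_digit_value_power_invariant:
  fixes A A' :: "'a::{finite,field} mat"
  assumes A: "A \<in> M_t t k t" "A' \<in> M_t t k t" and b: "b \<in> carrier_vec k" "b' \<in> carrier_vec k"
    and "e \<le> t" "t \<le> k"
  shows "(\<Sum>y\<in>carrier_vec t. digit_value \<delta> q k (A *\<^sub>v y + b) ^ e) =
         (\<Sum>y\<in>carrier_vec t. digit_value \<delta> q k (A' *\<^sub>v y + b') ^ e)"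
proof -
  define T where "T p w = (\<Prod>l\<in>{0..<e}. q ^ p l * \<delta> (w $ p l))" for p and w :: "'a vec"
  have "(\<Sum>y\<in>carrier_vec t. T p (A *\<^sub>v y + b)) = (\<Sum>y\<in>carrier_vec t. T p (A' *\<^sub>v y + b'))"
    if "p \<in> {0..<e} \<rightarrow>\<^sub>E {..<k}" for p
  proof (rule sum_M_t_affine_invariant[OF A b])
    show "p ` {0..<e} \<subseteq> {0..<k}"
      using that by auto
    show "card (p ` {0..<e}) \<le> t"
      using card_image_le[of "{0..<e}" p] \<open>e \<le> t\<close> by simp
    show "depends_only_on (p ` {0..<e}) (T p)"
      unfolding depends_only_on_def T_def by auto
  qed fact
  then show ?thesis
    unfolding digit_value_power T_def[symmetric] by (subst (1 2) sum.swap) simp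
qed

lemma base_digits_less:
  fixes q :: nat
  assumes "\<forall>i<N. a i < q"
  shows "(\<Sum>i<N. q ^ i * a i) < q ^ N"
  using assms
proof (induction N)
  case (Suc N)
  have "a N + 1 \<le> q"
    using Suc.prems by auto
  then have "q ^ N * (a N + 1) \<le> q ^ N * q"
    by (rule mult_le_mono2)
  moreover have "(\<Sum>i<N. q ^ i * a i) + 1 \<le> q ^ N"
    using Suc by (simp add: Suc_le_eq)
  ultimately show ?case
    by (simp add: algebra_simps)
qed simp

lemma base_digits_inj:
  fixes q :: nat
  assumes "\<forall>i<N. a i < q" "\<forall>i<N. b i < q" "(\<Sum>i<N. q ^ i * a i) = (\<Sum>i<N. q ^ i * b i)"
  shows "\<forall>i<N. a i = b i"
  using assms
proof (induction N)
  case (Suc N)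
  have less: "(\<Sum>i<N. q ^ i * a i) < q ^ N" "(\<Sum>i<N. q ^ i * b i) < q ^ N"
    using Suc.prems by (auto intro!: base_digits_less)
  have eq: "(\<Sum>i<N. q ^ i * a i) + q ^ N * a N = (\<Sum>i<N. q ^ i * b i) + q ^ N * b N"
    using Suc.prems(3) by simp
  have "q ^ N > 0"
    using less(1) by linarith
  then have top: "a N = b N"
    using arg_cong[OF eq, of "\<lambda>x. x div q ^ N"] less by simp
  then have "(\<Sum>i<N. q ^ i * a i) = (\<Sum>i<N. q ^ i * b i)"
    using eq by simp
  then have "\<forall>i<N. a i = b i"
    using Suc.prems(1,2) by (intro Suc.IH) auto
  then show ?case
    using top by (auto simp: less_Suc_eq)
qed simp

lemma digit_value_bij:
  fixes \<delta> :: "'a::finite \<Rightarrow> nat"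
  assumes \<delta>: "bij_betw \<delta> UNIV {0..<card (UNIV :: 'a set)}"
  shows "bij_betw (digit_value \<delta> (card (UNIV :: 'a set)) N) (carrier_vec N) {0..<card (UNIV :: 'a set) ^ N}"
proof -
  let ?q = "card (UNIV :: 'a set)"
  have \<delta>_less: "\<delta> x < ?q" for x
    using \<delta> by (auto simp: bij_betw_def)
  have "inj_on (digit_value \<delta> ?q N) (carrier_vec N)"
  proof (rule inj_onI)
    fix w w' :: "'a vec" assume w: "w \<in> carrier_vec N" "w' \<in> carrier_vec N"
      and eq: "digit_value \<delta> ?q N w = digit_value \<delta> ?q N w'"
    have "\<forall>i<N. \<delta> (w $ i) = \<delta> (w' $ i)"
      using eq \<delta>_less unfolding digit_value_def by (intro base_digits_inj) auto
    then have "\<forall>i<N. w $ i = w' $ i"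
      using \<delta> by (auto simp: bij_betw_def inj_on_def)
    then show "w = w'"
      using w by (intro eq_vecI) auto
  qed
  moreover have "digit_value \<delta> ?q N ` carrier_vec N = {0..<?q ^ N}"
  proof (rule card_subset_eq)
    show "digit_value \<delta> ?q N ` carrier_vec N \<subseteq> {0..<?q ^ N}"
      using \<delta>_less unfolding digit_value_def by (intro image_subsetI) (simp add: base_digits_less)
  qed (simp_all add: card_image[OF calculation] card_carrier_vec)
  ultimately show ?thesis
    by (simp add: bij_betw_def)
qed

lemma row_hcat:
  assumes "P \<in> carrier_mat n t" "Q \<in> carrier_mat n t'" "i < n"
  shows "row (hcat P Q) i = row P i @\<^sub>v row Q i"
  using assms by (intro eq_vecI) (auto simp: hcat_def)

lemma dim_row_hcat: "dim_row (hcat P Q) = dim_row P"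
  by (simp add: hcat_def)

lemma hcat_mult_append_vec:
  assumes P: "P \<in> carrier_mat n t" and Q: "Q \<in> carrier_mat n t'"
    and x: "x \<in> carrier_vec t" and y: "y \<in> carrier_vec t'"
  shows "hcat P Q *\<^sub>v (x @\<^sub>v y) = P *\<^sub>v x + Q *\<^sub>v y"
proof (rule eq_vecI)
  fix i assume "i < dim_vec (P *\<^sub>v x + Q *\<^sub>v y)"
  then have "i < n"
    using Q by simp
  moreover have "row P i \<in> carrier_vec t" "row Q i \<in> carrier_vec t'"
    using P Q by auto
  ultimately show "(hcat P Q *\<^sub>v (x @\<^sub>v y)) $ i = (P *\<^sub>v x + Q *\<^sub>v y) $ i"
    using P Q by (simp add: row_hcat dim_row_hcat scalar_prod_append[OF _ _ x y])
qed (use P Q in \<open>simp add: hcat_def\<close>)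

lemma nonsingular_mult_vec_inj:
  fixes A :: "'a::idom mat"
  assumes A: "A \<in> carrier_mat n n" "det A \<noteq> 0"
    and uv: "u \<in> carrier_vec n" "v \<in> carrier_vec n" and eq: "A *\<^sub>v u = A *\<^sub>v v"
  shows "u = v"
proof -
  have "A *\<^sub>v (u - v) = 0\<^sub>v n"
    using A uv eq by (simp add: mult_minus_distrib_mat_vec)
  moreover have "u - v \<in> carrier_vec n"
    using uv by simp
  ultimately have "u - v = 0\<^sub>v n"
    using A det_0_iff_vec_prod_zero[OF A(1)] by blast
  show ?thesis
  proof (rule eq_vecI)
    fix i assume "i < dim_vec v"
    then show "u $ i = v $ i"
      using arg_cong[OF \<open>u - v = 0\<^sub>v n\<close>, of "\<lambda>w. w $ i"] uv by simp
  qed (use uv in simp)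
qed

lemma nonsingular_affine_pair_bij:
  fixes P Q :: "'a::{finite,field} mat"
  assumes P: "P \<in> carrier_mat n t" and Q: "Q \<in> carrier_mat n t'" and n: "n = t + t'"
    and det: "det (hcat P Q) \<noteq> 0" and b: "b \<in> carrier_vec n"
  shows "bij_betw (\<lambda>(x, y). P *\<^sub>v x + Q *\<^sub>v y + b) (carrier_vec t \<times> carrier_vec t') (carrier_vec n)"
    (is "bij_betw ?F ?D _")
proof -
  have H: "hcat P Q \<in> carrier_mat n n"
    using P Q n by (simp add: hcat_def)
  have "inj_on ?F ?D"
  proof (rule inj_onI, clarify)
    fix x y x' y' assume xy: "x \<in> carrier_vec t" "y \<in> carrier_vec t'" "x' \<in> carrier_vec t" "y' \<in> carrier_vec t'"
      and eq: "P *\<^sub>v x + Q *\<^sub>v y + b = P *\<^sub>v x' + Q *\<^sub>v y' + b"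
    have "P *\<^sub>v x + Q *\<^sub>v y = P *\<^sub>v x' + Q *\<^sub>v y'"
    proof (rule eq_vecI)
      fix i assume "i < dim_vec (P *\<^sub>v x' + Q *\<^sub>v y')"
      then show "(P *\<^sub>v x + Q *\<^sub>v y) $ i = (P *\<^sub>v x' + Q *\<^sub>v y') $ i"
        using arg_cong[OF eq, of "\<lambda>w. w $ i"] P Q b by simp
    qed (use P Q in simp)
    then have "hcat P Q *\<^sub>v (x @\<^sub>v y) = hcat P Q *\<^sub>v (x' @\<^sub>v y')"
      by (simp add: hcat_mult_append_vec[OF P Q xy(1,2)] hcat_mult_append_vec[OF P Q xy(3,4)])
    moreover have "x @\<^sub>v y \<in> carrier_vec n" "x' @\<^sub>v y' \<in> carrier_vec n"
      using xy n by (simp_all add: append_carrier_vec)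
    ultimately have "x @\<^sub>v y = x' @\<^sub>v y'"
      using nonsingular_mult_vec_inj[OF H det] by blast
    then show "x = x' \<and> y = y'"
      using xy by simp
  qed
  moreover have "?F ` ?D = carrier_vec n"
  proof (rule card_subset_eq)
    show "?F ` ?D \<subseteq> carrier_vec n"
      using P Q b by (intro image_subsetI) auto
    show "card (?F ` ?D) = card (carrier_vec n :: 'a vec set)"
      using n by (simp add: card_image[OF calculation] card_cartesian_product card_carrier_vec power_add)
  qed (rule finite_carrier_vec)
  ultimately show ?thesis
    by (simp add: bij_betw_def)
qed

lemma sum_over_enumeration:
  fixes m :: nat
  assumes "bij_betw g {0..<m} X"
  shows "(\<Sum>i<m. f (g i)) = (\<Sum>x\<in>X. f x)"
  using sum.reindex_bij_betw[OF assms, of f] by (simp add: atLeast0LessThan)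

lemma sum_nonsingular_affine_pair:
  fixes P Q :: "'a::{finite,field} mat" and f :: "'a vec \<Rightarrow> 'b::comm_monoid_add" and m :: nat
  assumes g: "bij_betw g {0..<m} (carrier_vec t)"
    and P: "P \<in> carrier_mat (2*t) t" and Q: "Q \<in> carrier_mat (2*t) t"
    and det: "det (hcat P Q) \<noteq> 0" and b: "b \<in> carrier_vec (2*t)"
  shows "(\<Sum>s<m. \<Sum>i<m. f (P *\<^sub>v g i + Q *\<^sub>v g s + b)) = (\<Sum>w\<in>carrier_vec (2*t). f w)"
proof -
  note enum = sum_over_enumeration[OF g]
  have "(\<Sum>s<m. \<Sum>i<m. f (P *\<^sub>v g i + Q *\<^sub>v g s + b)) =
        (\<Sum>s<m. \<Sum>x\<in>carrier_vec t. f (P *\<^sub>v x + Q *\<^sub>v g s + b))"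
    by (intro sum.cong refl enum)
  also have "\<dots> = (\<Sum>y\<in>carrier_vec t. \<Sum>x\<in>carrier_vec t. f (P *\<^sub>v x + Q *\<^sub>v y + b))"
    by (rule enum)
  also have "\<dots> = (\<Sum>x\<in>carrier_vec t. \<Sum>y\<in>carrier_vec t. f (P *\<^sub>v x + Q *\<^sub>v y + b))"
    by (rule sum.swap)
  also have "\<dots> = (\<Sum>z\<in>carrier_vec t \<times> carrier_vec t. f ((\<lambda>(x, y). P *\<^sub>v x + Q *\<^sub>v y + b) z))"
    unfolding sum.cartesian_product by (intro sum.cong refl) auto
  also have "\<dots> = (\<Sum>w\<in>carrier_vec (2*t). f w)"
    by (rule sum.reindex_bij_betw[OF nonsingular_affine_pair_bij[OF P Q mult_2 det b]])
  finally show ?thesis .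
qed

text \<open>In characteristic 2 the map \<open>v \<mapsto> -v\<close> is the identity, so there we reflect in the
  all-ones vector instead, which leaves no vector fixed.\<close>

lemma exists_reflection_fixing_only_zero:
  "\<exists>c\<in>carrier_vec t. \<forall>v\<in>carrier_vec t. c - v = v \<longrightarrow> v = (0\<^sub>v t :: 'a::field vec)"
proof -
  define c :: "'a vec" where "c = (if (1::'a) + 1 = 0 then vec t (\<lambda>_. 1) else 0\<^sub>v t)"
  have "v = 0\<^sub>v t" if v: "v \<in> carrier_vec t" "c - v = v" for v
  proof (rule eq_vecI)
    fix j assume "j < dim_vec (0\<^sub>v t :: 'a vec)"
    then have j: "j < t" by simp
    then have "c $ j = (1 + 1) * v $ j"
      using arg_cong[OF v(2), of "\<lambda>w. w $ j"] v unfolding c_def by (auto simp: algebra_simps)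
    then show "v $ j = 0\<^sub>v t $ j"
      using j unfolding c_def by (auto split: if_splits)
  qed (use v in simp)
  moreover have "c \<in> carrier_vec t"
    by (simp add: c_def)
  ultimately show ?thesis
    by blast
qed

text \<open>With this enumeration the back diagonal \<open>j = n - 1 - i\<close> of a square becomes the affine
  line \<open>x \<mapsto> (E\<^sub>1 - E\<^sub>2) x + E\<^sub>2 c + b\<close>.\<close>

lemma reflection_symmetric_enumeration:
  obtains g and c :: "'a::{finite,field} vec"
  where "c \<in> carrier_vec t" "bij_betw g {0..<card (UNIV :: 'a set) ^ t} (carrier_vec t)"
    "\<forall>k<card (UNIV :: 'a set) ^ t. g (card (UNIV :: 'a set) ^ t - 1 - k) = c - g k"
proof -
  obtain c :: "'a vec" where c: "c \<in> carrier_vec t" "\<forall>v\<in>carrier_vec t. c - v = v \<longrightarrow> v = 0\<^sub>v t"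
    using exists_reflection_fixing_only_zero by blast
  have "{v \<in> carrier_vec t. c - v = v} \<subseteq> {0\<^sub>v t}"
    using c by auto
  then have "card {v \<in> carrier_vec t. c - v = v} \<le> card {0\<^sub>v t :: 'a vec}"
    by (rule card_mono[rotated]) simp
  moreover have "\<forall>v\<in>carrier_vec t. c - v \<in> carrier_vec t \<and> c - (c - v) = v"
    using c by (auto intro!: eq_vecI)
  ultimately have "\<exists>g. bij_betw g {0..<card (carrier_vec t :: 'a vec set)} (carrier_vec t) \<and>
      (\<forall>k<card (carrier_vec t :: 'a vec set). g (card (carrier_vec t :: 'a vec set) - 1 - k) = c - g k)"
    by (intro involution_symmetric_enumeration[OF finite_carrier_vec]) auto
  then obtain g where "bij_betw g {0..<card (carrier_vec t :: 'a vec set)} (carrier_vec t)"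
    "\<forall>k<card (carrier_vec t :: 'a vec set). g (card (carrier_vec t :: 'a vec set) - 1 - k) = c - g k"
    by blast
  then show ?thesis
    using that[OF c(1)] unfolding card_carrier_vec by blast
qed

lemma digit_value_square_bij:
  fixes \<delta> :: "'a::finite \<Rightarrow> nat"
  assumes "bij_betw \<delta> UNIV {0..<card (UNIV :: 'a set)}"
  shows "bij_betw (digit_value \<delta> (card (UNIV :: 'a set)) (2*t)) (carrier_vec (2*t))
    {0..<(card (UNIV :: 'a set) ^ t)^2}"
  using digit_value_bij[OF assms, of "2*t"] by (simp add: power_mult[symmetric] mult.commute)

lemma sum_digit_value_nonsingular_affine_pair_power:
  fixes P Q :: "'a::{finite,field} mat" and t :: nat
  defines "n \<equiv> card (UNIV :: 'a set) ^ t"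
  assumes \<delta>: "bij_betw \<delta> UNIV {0..<card (UNIV :: 'a set)}"
    and g: "bij_betw g {0..<n} (carrier_vec t)"
    and PQ: "P \<in> carrier_mat (2*t) t" "Q \<in> carrier_mat (2*t) t" "det (hcat P Q) \<noteq> 0"
    and b: "b \<in> carrier_vec (2*t)"
  shows "(\<Sum>s<n. \<Sum>i<n. real (digit_value \<delta> (card (UNIV :: 'a set)) (2*t) (P *\<^sub>v g i + Q *\<^sub>v g s + b)) ^ e) =
    (\<Sum>k<n^2. real k ^ e)"
proof -
  let ?V = "digit_value \<delta> (card (UNIV :: 'a set)) (2*t)"
  have "(\<Sum>s<n. \<Sum>i<n. real (?V (P *\<^sub>v g i + Q *\<^sub>v g s + b)) ^ e) =
      (\<Sum>w\<in>carrier_vec (2*t). real (?V w) ^ e)"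
    by (rule sum_nonsingular_affine_pair[OF g PQ b])
  also have "\<dots> = (\<Sum>k<n^2. real k ^ e)"
    using sum.reindex_bij_betw[OF digit_value_square_bij[OF \<delta>], of "\<lambda>k. real k ^ e"]
    by (simp add: n_def atLeast0LessThan)
  finally show ?thesis .
qed

lemma digit_value_affine_square_bij:
  fixes E1 E2 :: "'a::{finite,field} mat" and t :: nat
  defines "n \<equiv> card (UNIV :: 'a set) ^ t"
  assumes \<delta>: "bij_betw \<delta> UNIV {0..<card (UNIV :: 'a set)}"
    and g: "bij_betw g {0..<n} (carrier_vec t)"
    and E: "E1 \<in> carrier_mat (2*t) t" "E2 \<in> carrier_mat (2*t) t"
    and det: "det (hcat E1 E2) \<noteq> 0" and b: "b \<in> carrier_vec (2*t)"
  shows "bij_betw (\<lambda>(i, j). digit_value \<delta> (card (UNIV :: 'a set)) (2*t) (E1 *\<^sub>v g i + E2 *\<^sub>v g j + b))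
    ({0..<n} \<times> {0..<n}) {0..<n^2}"
proof -
  let ?V = "digit_value \<delta> (card (UNIV :: 'a set)) (2*t)"
  have "bij_betw (?V \<circ> (\<lambda>(x, y). E1 *\<^sub>v x + E2 *\<^sub>v y + b) \<circ> map_prod g g)
      ({0..<n} \<times> {0..<n}) {0..<n^2}"
    using bij_betw_map_prod[OF g g] nonsingular_affine_pair_bij[OF E mult_2 det b]
      digit_value_square_bij[OF \<delta>, of t, folded n_def]
    by (intro bij_betw_trans)
  moreover have "?V \<circ> (\<lambda>(x, y). E1 *\<^sub>v x + E2 *\<^sub>v y + b) \<circ> map_prod g g =
      (\<lambda>(i, j). ?V (E1 *\<^sub>v g i + E2 *\<^sub>v g j + b))"
    by auto
  ultimately show ?thesis
    by simp
qed

lemma MS_affine_square: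
  fixes E1 E2 :: "'a::{finite,field} mat" and t :: nat
  defines "n \<equiv> card (UNIV :: 'a set) ^ t"
  assumes \<delta>: "bij_betw \<delta> UNIV {0..<card (UNIV :: 'a set)}"
    and g: "bij_betw g {0..<n} (carrier_vec t)"
    and c: "c \<in> carrier_vec t" "\<forall>k<n. g (n - 1 - k) = c - g k"
    and M: "E1 \<in> M_t t (2*t) t" "E2 \<in> M_t t (2*t) t" "E1 + E2 \<in> M_t t (2*t) t" "E1 - E2 \<in> M_t t (2*t) t"
    and det: "det (hcat E1 E2) \<noteq> 0" and b: "b \<in> carrier_vec (2*t)"
  shows "MS n t (\<lambda>i j. digit_value \<delta> (card (UNIV :: 'a set)) (2*t) (E1 *\<^sub>v g i + E2 *\<^sub>v g j + b))"
proof -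
  define V where "V = digit_value \<delta> (card (UNIV :: 'a set)) (2*t)"
  have E: "E1 \<in> carrier_mat (2*t) t" "E2 \<in> carrier_mat (2*t) t"
    using M by (simp_all add: M_t_carrier)
  have gc: "g i \<in> carrier_vec t" if "i < n" for i
    using g that by (auto simp: bij_betw_def)
  have line: "(\<Sum>i<n. V (A *\<^sub>v g i + b') ^ e) = (\<Sum>y\<in>carrier_vec t. V (E1 *\<^sub>v y + b) ^ e)"
    if "A \<in> M_t t (2*t) t" "b' \<in> carrier_vec (2*t)" "e \<le> t" for A b' e
  proof -
    have "(\<Sum>i<n. V (A *\<^sub>v g i + b') ^ e) = (\<Sum>y\<in>carrier_vec t. V (A *\<^sub>v y + b') ^ e)"
      by (rule sum_over_enumeration[OF g])
    also have "\<dots> = (\<Sum>y\<in>carrier_vec t. V (E1 *\<^sub>v y + b) ^ e)"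
      unfolding V_def by (rule sum_M_t_affine_digit_value_power_invariant[OF that(1) M(1) that(2) b that(3)]) simp
    finally show ?thesis .
  qed
  have rearrange_lines:
    "E1 *\<^sub>v x + E2 *\<^sub>v y + b = E2 *\<^sub>v y + (E1 *\<^sub>v x + b)"
    "E1 *\<^sub>v x + E2 *\<^sub>v y + b = E1 *\<^sub>v x + (E2 *\<^sub>v y + b)"
    if "x \<in> carrier_vec t" "y \<in> carrier_vec t" for x y
    using E that b by (auto intro!: eq_vecI)
  have rearrange_diagonals:
    "E1 *\<^sub>v x + E2 *\<^sub>v x + b = (E1 + E2) *\<^sub>v x + b"
    "E1 *\<^sub>v x + E2 *\<^sub>v (c - x) + b = (E1 - E2) *\<^sub>v x + (E2 *\<^sub>v c + b)"
    if "x \<in> carrier_vec t" for x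
    using E that b c(1) by (auto simp: add_mult_distrib_mat_vec minus_mult_distrib_mat_vec
        mult_minus_distrib_mat_vec intro!: eq_vecI)
  have "\<exists>base. (\<forall>i<n. (\<Sum>j<n. V (E1 *\<^sub>v g i + E2 *\<^sub>v g j + b) ^ e) = base) \<and>
      (\<forall>j<n. (\<Sum>i<n. V (E1 *\<^sub>v g i + E2 *\<^sub>v g j + b) ^ e) = base) \<and>
      (\<Sum>i<n. V (E1 *\<^sub>v g i + E2 *\<^sub>v g i + b) ^ e) = base \<and>
      (\<Sum>i<n. V (E1 *\<^sub>v g i + E2 *\<^sub>v g (n - 1 - i) + b) ^ e) = base"
    if e: "e \<le> t" for e
  proof (intro exI conjI allI impI)
    fix i assume "i < n"
    then show "(\<Sum>j<n. V (E1 *\<^sub>v g i + E2 *\<^sub>v g j + b) ^ e) = (\<Sum>y\<in>carrier_vec t. V (E1 *\<^sub>v y + b) ^ e)"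
      using line[OF M(2) _ e, of "E1 *\<^sub>v g i + b"] E b by (simp add: rearrange_lines(1) gc)
  next
    fix j assume "j < n"
    then show "(\<Sum>i<n. V (E1 *\<^sub>v g i + E2 *\<^sub>v g j + b) ^ e) = (\<Sum>y\<in>carrier_vec t. V (E1 *\<^sub>v y + b) ^ e)"
      using line[OF M(1) _ e, of "E2 *\<^sub>v g j + b"] E b by (simp add: rearrange_lines(2) gc)
  next
    show "(\<Sum>i<n. V (E1 *\<^sub>v g i + E2 *\<^sub>v g i + b) ^ e) = (\<Sum>y\<in>carrier_vec t. V (E1 *\<^sub>v y + b) ^ e)"
      using line[OF M(3) b e] by (simp add: rearrange_diagonals(1) gc)
  next
    show "(\<Sum>i<n. V (E1 *\<^sub>v g i + E2 *\<^sub>v g (n - 1 - i) + b) ^ e) = (\<Sum>y\<in>carrier_vec t. V (E1 *\<^sub>v y + b) ^ e)"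
      using line[OF M(4) _ e, of "E2 *\<^sub>v c + b"] E b c by (simp add: rearrange_diagonals(2) gc)
  qed
  then show ?thesis
    using digit_value_affine_square_bij[OF \<delta> g[unfolded n_def] E det b]
    unfolding MS_def V_def n_def by auto
qed

lemma CMS_affine_cube:
  fixes E1 E2 F :: "'a::{finite,field} mat" and t :: nat
  defines "n \<equiv> card (UNIV :: 'a set) ^ t"
  assumes \<delta>: "bij_betw \<delta> UNIV {0..<card (UNIV :: 'a set)}"
    and g: "bij_betw g {0..<n} (carrier_vec t)"
    and c: "c \<in> carrier_vec t" "\<forall>k<n. g (n - 1 - k) = c - g k"
    and M: "E1 \<in> M_t t (2*t) t" "E2 \<in> M_t t (2*t) t" "E1 + E2 \<in> M_t t (2*t) t" "E1 - E2 \<in> M_t t (2*t) t"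
    and F: "F \<in> carrier_mat (2*t) t"
    and det: "det (hcat E1 E2) \<noteq> 0" "det (hcat E1 F) \<noteq> 0" "det (hcat E2 F) \<noteq> 0"
      "det (hcat (E1 + E2) F) \<noteq> 0" "det (hcat (E1 - E2) F) \<noteq> 0"
  shows "CMS n n t (\<lambda>s i j. digit_value \<delta> (card (UNIV :: 'a set)) (2*t) (E1 *\<^sub>v g i + E2 *\<^sub>v g j + F *\<^sub>v g s))"
proof -
  define V where "V = digit_value \<delta> (card (UNIV :: 'a set)) (2*t)"
  define total where "total = (\<Sum>k<n^2. real k ^ (t+1))"
  have E: "E1 \<in> carrier_mat (2*t) t" "E2 \<in> carrier_mat (2*t) t"
    "E1 + E2 \<in> carrier_mat (2*t) t" "E1 - E2 \<in> carrier_mat (2*t) t"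
    using M by (simp_all add: M_t_carrier)
  have gc: "g i \<in> carrier_vec t" if "i < n" for i
    using g that by (auto simp: bij_betw_def)
  have plane: "(\<Sum>s<n. \<Sum>i<n. real (V (P *\<^sub>v g i + Q *\<^sub>v g s + b)) ^ (t+1)) = total"
    if "P \<in> carrier_mat (2*t) t" "Q \<in> carrier_mat (2*t) t" "det (hcat P Q) \<noteq> 0" "b \<in> carrier_vec (2*t)"
    for P Q b
    unfolding V_def total_def n_def
    by (rule sum_digit_value_nonsingular_affine_pair_power[OF \<delta> g[unfolded n_def] that])
  have rearrange_lines:
    "E1 *\<^sub>v x + E2 *\<^sub>v y + F *\<^sub>v z = E2 *\<^sub>v y + F *\<^sub>v z + E1 *\<^sub>v x"
    "E1 *\<^sub>v x + E2 *\<^sub>v y + F *\<^sub>v z = E1 *\<^sub>v x + F *\<^sub>v z + E2 *\<^sub>v y"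
    if "x \<in> carrier_vec t" "y \<in> carrier_vec t" "z \<in> carrier_vec t" for x y z
    using E F that by (auto intro!: eq_vecI)
  have rearrange_diagonals:
    "E1 *\<^sub>v x + E2 *\<^sub>v x + F *\<^sub>v z = (E1 + E2) *\<^sub>v x + F *\<^sub>v z + 0\<^sub>v (2*t)"
    "E1 *\<^sub>v x + E2 *\<^sub>v (c - x) + F *\<^sub>v z = (E1 - E2) *\<^sub>v x + F *\<^sub>v z + E2 *\<^sub>v c"
    if "x \<in> carrier_vec t" "z \<in> carrier_vec t" for x z
    using E F that c(1) by (auto simp: add_mult_distrib_mat_vec minus_mult_distrib_mat_vec
        mult_minus_distrib_mat_vec intro!: eq_vecI)
  have "real n * S (t+1) n = total"
    unfolding S_def total_def n_def by simp
  moreover have "MS n t (\<lambda>i j. V (E1 *\<^sub>v g i + E2 *\<^sub>v g j + F *\<^sub>v g s))" if "s < n" for s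
    unfolding V_def n_def
    using MS_affine_square[OF \<delta> g[unfolded n_def] c[unfolded n_def] M det(1)] F gc[OF that] by simp
  moreover have "(\<Sum>s<n. \<Sum>j<n. real (V (E1 *\<^sub>v g i + E2 *\<^sub>v g j + F *\<^sub>v g s)) ^ (t+1)) = total"
    if "i < n" for i
    using plane[OF E(2) F det(3), of "E1 *\<^sub>v g i"] E that by (simp add: rearrange_lines(1) gc)
  moreover have "(\<Sum>s<n. \<Sum>i<n. real (V (E1 *\<^sub>v g i + E2 *\<^sub>v g j + F *\<^sub>v g s)) ^ (t+1)) = total"
    if "j < n" for j
    using plane[OF E(1) F det(2), of "E2 *\<^sub>v g j"] E that by (simp add: rearrange_lines(2) gc)
  moreover have "(\<Sum>s<n. \<Sum>i<n. real (V (E1 *\<^sub>v g i + E2 *\<^sub>v g i + F *\<^sub>v g s)) ^ (t+1)) = total"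
    using plane[OF E(3) F det(4) zero_carrier_vec] by (simp add: rearrange_diagonals(1) gc)
  moreover have "(\<Sum>s<n. \<Sum>i<n. real (V (E1 *\<^sub>v g i + E2 *\<^sub>v g (n - 1 - i) + F *\<^sub>v g s)) ^ (t+1)) = total"
    using plane[OF E(4) F det(5), of "E2 *\<^sub>v c"] E c by (simp add: rearrange_diagonals(2) gc)
  ultimately show ?thesis
    unfolding CMS_def V_def by simp
qed

theorem lemma3p3:
  fixes t :: nat and d :: "'a::{finite,field}" and E1 E2 :: "'a mat"
  assumes "t \<ge> 2"
    and "E1 \<in> carrier_mat (2*t) t" and "E2 \<in> carrier_mat (2*t) t"
    and "E1 \<in> M_t t (2*t) t" and "E2 \<in> M_t t (2*t) t"
    and "E1 + E2 \<in> M_t t (2*t) t" and "E1 - E2 \<in> M_t t (2*t) t"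
    and "det (hcat E1 E2) \<noteq> 0"
    and "det (hcat E1 (E1 + d \<cdot>\<^sub>m E2)) \<noteq> 0"
    and "det (hcat E2 (E1 + d \<cdot>\<^sub>m E2)) \<noteq> 0"
    and "det (hcat (E1 + E2) (E1 + d \<cdot>\<^sub>m E2)) \<noteq> 0"
    and "det (hcat (E1 - E2) (E1 + d \<cdot>\<^sub>m E2)) \<noteq> 0"
  shows "\<exists>B. CMS (card (UNIV :: 'a set) ^ t) (card (UNIV :: 'a set) ^ t) t B"
proof -
  obtain g and c :: "'a vec" where c: "c \<in> carrier_vec t"
    and g: "bij_betw g {0..<card (UNIV :: 'a set) ^ t} (carrier_vec t)"
    and g_reflection: "\<forall>k<card (UNIV :: 'a set) ^ t. g (card (UNIV :: 'a set) ^ t - 1 - k) = c - g k"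
    by (rule reflection_symmetric_enumeration)
  obtain \<delta> :: "'a \<Rightarrow> nat" where \<delta>: "bij_betw \<delta> UNIV {0..<card (UNIV :: 'a set)}"
    using ex_bij_betw_finite_nat[OF finite_UNIV] by blast
  have "E1 + d \<cdot>\<^sub>m E2 \<in> carrier_mat (2*t) t"
    using assms(2,3) by simp
  then show ?thesis
    using CMS_affine_cube[OF \<delta> g c g_reflection assms(4-7) _ assms(8-12)] by blast
qed

end
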